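(* Let $K,L\ (\le K),F,Z,S,u$ be positive integers and let $\hat{\mathbf{A}}$ be a $(K,L,F,Z,S)$ EPDA. Then the $F\times uK$ array $\mathbf{A}=[\hat{\mathbf{A}}\,|\,\hat{\mathbf{A}}\,|\,\cdots\,|\,\hat{\mathbf{A}}]$ obtained by placing $u$ copies of $\hat{\mathbf{A}}$ side by side is a $(uK,uL,F,Z,S)$ EPDA.
   Context: Notation: $[n]=\{1,\dots,n\}$. An $F\times K$ array $\mathbf{A}=[a_{j,k}]$ with entries either a symbol $\star$ or integers in $[S]$ is a $(K,L,F,Z,S)$ EPDA (where $L\le K$) if: (C1) $\star$ appears exactly $Z$ times in each column; (C2) every integer in $[S]$ occurs at least once; (C3) no integer appears more than once in any column; (C4) for each $s\in[S]$, letting $\mathbf{A}^{(s)}$ be the subarray obtained by deleting all rows and columns of $\mathbf{A}$ not containing $s$, no row of $\mathbf{A}^{(s)}$ contains more than $L$ integer entries. *)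

theory Defs
  imports Main
begin

text \<open>An F x K array with entries star or an integer in [S] is modelled as a function
  A :: nat => nat => nat option, where A j k is the entry in row j (0 <= j < F) and
  column k (0 <= k < K); None represents the star symbol, Some s the integer s.
  Values outside the index ranges are irrelevant.\<close>

definition row_has :: "(nat \<Rightarrow> nat \<Rightarrow> nat option) \<Rightarrow> nat \<Rightarrow> nat \<Rightarrow> nat \<Rightarrow> bool" where
  "row_has A K j s \<longleftrightarrow> (\<exists>k<K. A j k = Some s)"

definition col_has :: "(nat \<Rightarrow> nat \<Rightarrow> nat option) \<Rightarrow> nat \<Rightarrow> nat \<Rightarrow> nat \<Rightarrow> bool" where
  "col_has A F k s \<longleftrightarrow> (\<exists>j<F. A j k = Some s)"

definition is_EPDA ::
  "nat \<Rightarrow> nat \<Rightarrow> nat \<Rightarrow> nat \<Rightarrow> nat \<Rightarrow> (nat \<Rightarrow> nat \<Rightarrow> nat option) \<Rightarrow> bool" where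
  "is_EPDA K L F Z S A \<longleftrightarrow>
     L \<le> K \<and>
     \<comment> \<open>entries are star or integers in [S]\<close>
     (\<forall>j<F. \<forall>k<K. \<forall>s. A j k = Some s \<longrightarrow> s \<in> {1..S}) \<and>
     \<comment> \<open>(C1) star appears exactly Z times in each column\<close>
     (\<forall>k<K. card {j. j < F \<and> A j k = None} = Z) \<and>
     \<comment> \<open>(C2) every integer in [S] occurs at least once\<close>
     (\<forall>s\<in>{1..S}. \<exists>j<F. \<exists>k<K. A j k = Some s) \<and>
     \<comment> \<open>(C3) no integer appears more than once in any column\<close>
     (\<forall>k<K. \<forall>j1<F. \<forall>j2<F. A j1 k \<noteq> None \<longrightarrow> A j1 k = A j2 k \<longrightarrow> j1 = j2) \<and>
     \<comment> \<open>(C4) in the subarray A^(s) (rows and columns containing s), no row has more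
         than L integer entries\<close>
     (\<forall>s\<in>{1..S}. \<forall>j<F. row_has A K j s \<longrightarrow>
        card {k. k < K \<and> col_has A F k s \<and> A j k \<noteq> None} \<le> L)"

text \<open>Horizontal concatenation of u copies of an F x K array: column k of the result
  (0 <= k < u*K) is column (k mod K) of the original.\<close>

definition rep_cols :: "nat \<Rightarrow> (nat \<Rightarrow> nat \<Rightarrow> nat option) \<Rightarrow> nat \<Rightarrow> nat \<Rightarrow> nat option" where
  "rep_cols K A = (\<lambda>j k. A j (k mod K))"

end

theory Submission
  imports Defs
begin

text \<open>Column k of the repeated array is column k mod K of the original, so the range
  condition, C1, C2 and C3 are inherited. For C4, a row of the repeated array meets s exactly
  when the original row does, and the columns of the subarray for s that it meets are the u
  translates k + i K of the original ones, whence the bound u L.\<close>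

lemma card_mod_preimage:
  fixes K u :: nat
  assumes "B \<subseteq> {..<K}"
  shows "card {k. k < u * K \<and> k mod K \<in> B} = u * card B"
proof -
  let ?g = "\<lambda>k. (k div K, k mod K)"
  have "bij_betw ?g {k. k < u * K \<and> k mod K \<in> B} ({..<u} \<times> B)"
  proof (rule bij_betw_byWitness[where f' = "\<lambda>(i, b). i * K + b"])
    have "i * K + b < u * K" if "i < u" "b < K" for i b
    proof -
      have "i * K + b < Suc i * K" using that(2) by simp
      also have "\<dots> \<le> u * K" using that(1) by (intro mult_le_mono1) simp
      finally show ?thesis .
    qed
    then show "(\<lambda>(i, b). i * K + b) ` ({..<u} \<times> B) \<subseteq> {k. k < u * K \<and> k mod K \<in> B}"
      using assms by auto
  qed (use assms in \<open>auto simp: less_mult_imp_div_less\<close>)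
  moreover have "finite B" using assms finite_subset by blast
  ultimately show ?thesis
    by (simp add: bij_betw_same_card card_cartesian_product)
qed

lemma mod_less_of_less_mult:
  fixes k K u :: nat
  assumes "k < u * K"
  shows "k mod K < K"
  using assms by (cases "K = 0") simp_all

lemma column_rep_cols: "rep_cols K A j k = A j (k mod K)"
  by (simp add: rep_cols_def)

lemma all_columns_rep_cols:
  assumes "\<forall>k<K. P (\<lambda>j. A j k)"
  shows "\<forall>k<u * K. P (\<lambda>j. rep_cols K A j k)"
proof (intro allI impI)
  fix k assume "k < u * K"
  then have "k mod K < K" by (rule mod_less_of_less_mult)
  with assms have "P (\<lambda>j. A j (k mod K))" by blast
  then show "P (\<lambda>j. rep_cols K A j k)" by (simp add: column_rep_cols)
qed

lemma row_has_rep_cols: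
  assumes "0 < u"
  shows "row_has (rep_cols K A) (u * K) j s \<longleftrightarrow> row_has A K j s"
proof
  assume "row_has (rep_cols K A) (u * K) j s"
  then obtain k where "k < u * K" "A j (k mod K) = Some s"
    unfolding row_has_def column_rep_cols by blast
  moreover from \<open>k < u * K\<close> have "k mod K < K" by (rule mod_less_of_less_mult)
  ultimately show "row_has A K j s" unfolding row_has_def by blast
next
  assume "row_has A K j s"
  then obtain k where "k < K" "A j k = Some s" unfolding row_has_def by blast
  moreover have "k < u * K" using \<open>k < K\<close> assms by (simp add: less_le_trans)
  ultimately show "row_has (rep_cols K A) (u * K) j s"
    unfolding row_has_def column_rep_cols by (intro exI[of _ k]) simp
qed

lemma col_has_rep_cols: "col_has (rep_cols K A) F k s \<longleftrightarrow> col_has A F (k mod K) s"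
  by (simp only: col_has_def column_rep_cols)

lemma card_subarray_row_rep_cols:
  "card {k. k < u * K \<and> col_has (rep_cols K A) F k s \<and> rep_cols K A j k \<noteq> None}
     = u * card {k. k < K \<and> col_has A F k s \<and> A j k \<noteq> None}"
proof -
  let ?B = "{k. k < K \<and> col_has A F k s \<and> A j k \<noteq> None}"
  have "{k. k < u * K \<and> col_has (rep_cols K A) F k s \<and> rep_cols K A j k \<noteq> None}
      = {k. k < u * K \<and> k mod K \<in> ?B}"
    using mod_less_of_less_mult[of _ u K] by (auto simp: col_has_rep_cols column_rep_cols)
  moreover have "card {k. k < u * K \<and> k mod K \<in> ?B} = u * card ?B"
    by (rule card_mod_preimage) blast
  ultimately show ?thesis by (simp only:)
qed

theorem lemma4:
  fixes K L F Z S u :: nat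
    and A :: "nat \<Rightarrow> nat \<Rightarrow> nat option"
  assumes "0 < K" "0 < L" "L \<le> K" "0 < F" "0 < Z" "0 < S" "0 < u"
    and "is_EPDA K L F Z S A"
  shows "is_EPDA (u * K) (u * L) F Z S (rep_cols K A)"
proof -
  have range: "\<forall>j<F. \<forall>k<K. \<forall>s. A j k = Some s \<longrightarrow> s \<in> {1..S}"
    and C1: "\<forall>k<K. card {j. j < F \<and> A j k = None} = Z"
    and C2: "\<forall>s\<in>{1..S}. \<exists>j<F. \<exists>k<K. A j k = Some s"
    and C3: "\<forall>k<K. \<forall>j1<F. \<forall>j2<F. A j1 k \<noteq> None \<longrightarrow> A j1 k = A j2 k \<longrightarrow> j1 = j2"
    and C4: "\<forall>s\<in>{1..S}. \<forall>j<F. row_has A K j s \<longrightarrow>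
        card {k. k < K \<and> col_has A F k s \<and> A j k \<noteq> None} \<le> L"
    using assms(8) unfolding is_EPDA_def by blast+
  let ?A = "rep_cols K A"
  have "\<forall>k<u * K. \<forall>j<F. \<forall>s. ?A j k = Some s \<longrightarrow> s \<in> {1..S}"
    by (rule all_columns_rep_cols[where P = "\<lambda>c. \<forall>j<F. \<forall>s. c j = Some s \<longrightarrow> s \<in> {1..S}"])
      (use range in blast)
  moreover have "\<forall>k<u * K. card {j. j < F \<and> ?A j k = None} = Z"
    by (rule all_columns_rep_cols[where P = "\<lambda>c. card {j. j < F \<and> c j = None} = Z"])
      (use C1 in blast)
  moreover have "\<forall>s\<in>{1..S}. \<exists>j<F. \<exists>k<u * K. ?A j k = Some s"
    using C2 row_has_rep_cols[OF \<open>0 < u\<close>] unfolding row_has_def by blast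
  moreover have "\<forall>k<u * K. \<forall>j1<F. \<forall>j2<F. ?A j1 k \<noteq> None \<longrightarrow> ?A j1 k = ?A j2 k \<longrightarrow> j1 = j2"
    by (rule all_columns_rep_cols[where P = "\<lambda>c. \<forall>j1<F. \<forall>j2<F. c j1 \<noteq> None \<longrightarrow> c j1 = c j2 \<longrightarrow> j1 = j2"])
      (use C3 in blast)
  moreover have "\<forall>s\<in>{1..S}. \<forall>j<F. row_has ?A (u * K) j s \<longrightarrow>
      card {k. k < u * K \<and> col_has ?A F k s \<and> ?A j k \<noteq> None} \<le> u * L"
    unfolding row_has_rep_cols[OF \<open>0 < u\<close>] card_subarray_row_rep_cols
    using C4 by simp
  ultimately show ?thesis
    unfolding is_EPDA_def using \<open>L \<le> K\<close> by auto
qed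

end
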